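(* Let $\mathbb{F}$ be a field, $n\geq 1$, and $(s_0,\ldots,s_{n-1})\in\mathbb{F}^n$ a non-zero sequence with inverse form $F=\sum_{j=1-n}^{0} s_{-j}\,x^{j}z^{1-n-j}\in\mathbb{F}[x^{-1},z^{-1}]$. Then the maps $c\mapsto c^\wedge$ and $f\mapsto f^\vee$ are mutually inverse bijections $$\chi(s_0,\ldots,s_{n-1})\;\leftrightarrows\;\mathcal{I}_F\cap\mathcal{L},$$ and they preserve degree: $|c^\wedge|=|c|$ for $c\in\chi(s_0,\ldots,s_{n-1})$ and $|f^\vee|=|f|$ for $f\in\mathcal{I}_F\cap\mathcal{L}$. Consequently $\lambda(s_0,\ldots,s_{n-1})=\lambda_F$.
   Context: $R=\mathbb{F}[x,z]$; a form is a homogeneous polynomial, $|\varphi|$ denotes total degree. $M=\mathbb{F}[x^{-1},z^{-1}]$ is an $R$-module via $x^pz^q\circ x^{-u}z^{-v}=x^{p-u}z^{q-v}$ if $p\le u$ and $q\le v$, and $0$ otherwise ($p,q,u,v\ge 0$), extended bilinearly. For $F\in M$, $\mathcal{I}_F=\{\varphi\in R:\varphi\circ F=0\}$ (the annihilator ideal). $\mathcal{L}$ is the set of non-zero forms $\varphi\in R$ whose coefficient of $x^{|\varphi|}$ equals $1$ (equivalently, monic forms whose graded-lexicographic leading term, with $x\succ z$, is not divisible by $z$). A monic $c\in\mathbb{F}[x]$ of degree $l$ is a characteristic polynomial of $(s_0,\ldots,s_{n-1})$ if either $l\ge n$ or $c_ls_{k+l}+\cdots+c_0s_k=0$ for all $0\le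 k\le n-l-1$; $\chi(s_0,\ldots,s_{n-1})$ is the set of these, and $\lambda(s_0,\ldots,s_{n-1})$ is the minimal degree of an element of it (the linear complexity). $\lambda_F=\min\{|f|: f\in\mathcal{I}_F\cap\mathcal{L}\}$. Homogenisation: $c^\wedge(x,z)=z^{|c|}c(x/z)$; dehomogenisation: $f^\vee(x)=f(x,1)$. *)

theory Defs
  imports "HOL-Computational_Algebra.Polynomial" "HOL-Library.Poly_Mapping"
begin

text \<open>Elements of R = F[x,z] are finitely supported maps from exponent pairs (p,q)
  (monomial x^p z^q) to coefficients.  Elements of M = F[x^-1,z^-1] are likewise
  finitely supported maps, (u,v) standing for the monomial x^-u z^-v.\<close>

type_synonym 'a bipoly = "(nat \<times> nat) \<Rightarrow>\<^sub>0 'a"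
type_synonym 'a invpoly = "(nat \<times> nat) \<Rightarrow>\<^sub>0 'a"

definition is_form :: "'a::zero bipoly \<Rightarrow> bool" where
  "is_form f \<longleftrightarrow> (\<exists>d. \<forall>(p,q)\<in>Poly_Mapping.keys f. p + q = d)"

definition tdeg :: "'a::zero bipoly \<Rightarrow> nat" where
  "tdeg f = Max ({p + q | p q. (p,q) \<in> Poly_Mapping.keys f} \<union> {0})"

definition Lset :: "'a::{zero,one} bipoly set" where
  "Lset = {f. f \<noteq> 0 \<and> is_form f \<and> Poly_Mapping.lookup f (tdeg f, 0) = 1}"

text \<open>Coefficient of x^-a z^-b in phi o F:
  x^p z^q o x^-u z^-v = x^-(u-p) z^-(v-q) if p<=u, q<=v, else 0, extended bilinearly.\<close>
definition act_coeff :: "'a::comm_semiring_1 bipoly \<Rightarrow> 'a invpoly \<Rightarrow> nat \<times> nat \<Rightarrow> 'a" where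
  "act_coeff \<phi> F = (\<lambda>(a,b). \<Sum>(p,q)\<in>Poly_Mapping.keys \<phi>. Poly_Mapping.lookup \<phi> (p,q) * Poly_Mapping.lookup F (a + p, b + q))"

definition annih :: "'a::comm_semiring_1 invpoly \<Rightarrow> 'a bipoly set" where
  "annih F = {\<phi>. act_coeff \<phi> F = (\<lambda>_. 0)}"

text \<open>Inverse form F = sum_{j=1-n}^0 s_{-j} x^j z^{1-n-j} = sum_{i<n} s_i x^-i z^-(n-1-i).\<close>
definition inverse_form :: "(nat \<Rightarrow> 'a::comm_monoid_add) \<Rightarrow> nat \<Rightarrow> 'a invpoly" where
  "inverse_form s n = (\<Sum>i<n. Poly_Mapping.single (i, n - 1 - i) (s i))"

definition chi :: "(nat \<Rightarrow> 'a::comm_semiring_1) \<Rightarrow> nat \<Rightarrow> 'a poly set" where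
  "chi s n = {c. lead_coeff c = 1 \<and>
     (degree c \<ge> n \<or> (\<forall>k. k + degree c < n \<longrightarrow> (\<Sum>i\<le>degree c. coeff c i * s (k + i)) = 0))}"

definition lin_compl :: "(nat \<Rightarrow> 'a::comm_semiring_1) \<Rightarrow> nat \<Rightarrow> nat" where
  "lin_compl s n = (LEAST d. \<exists>c\<in>chi s n. degree c = d)"

definition lambdaF :: "'a::comm_semiring_1 invpoly \<Rightarrow> nat" where
  "lambdaF F = (LEAST d. \<exists>f\<in>annih F \<inter> Lset. tdeg f = d)"

text \<open>Homogenisation c^ = z^{|c|} c(x/z) and dehomogenisation f^v(x) = f(x,1).\<close>
definition homog :: "'a::comm_monoid_add poly \<Rightarrow> 'a bipoly" where
  "homog c = (\<Sum>i\<le>degree c. Poly_Mapping.single (i, degree c - i) (coeff c i))"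

definition dehom :: "'a::comm_semiring_1 bipoly \<Rightarrow> 'a poly" where
  "dehom f = (\<Sum>(p,q)\<in>Poly_Mapping.keys f. monom (Poly_Mapping.lookup f (p,q)) p)"

end

theory Submission imports Defs begin

text \<open>A form \<open>\<phi>\<close> of degree \<open>d\<close> maps the inverse form \<open>F\<close> into the single degree
  \<open>d + 1 - n\<close>, and the coefficient of \<open>x^-k z^-(n-1-k-d)\<close> in \<open>\<phi> \<circ> F\<close> is
  \<open>\<Sum>i\<le>d. \<phi>(i,d-i) s(k+i)\<close>.  So \<open>\<phi> \<in> I_F\<close> says exactly that the coefficients of the
  dehomogenisation of \<open>\<phi>\<close> satisfy the linear recurrences on \<open>s\<close>, and the normalisation
  defining \<open>L\<close> is its monicity in degree \<open>d\<close>.  Homogenisation and dehomogenisation are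
  mutually inverse between monic polynomials of degree \<open>d\<close> and forms of degree \<open>d\<close> in
  \<open>L\<close>, hence restrict to degree-preserving bijections between \<open>\<chi>\<close> and \<open>I_F \<inter> L\<close>.\<close>

definition form_of_degree :: "nat \<Rightarrow> 'a::zero bipoly \<Rightarrow> bool" where
  "form_of_degree d f \<longleftrightarrow> (\<forall>(p,q)\<in>Poly_Mapping.keys f. p + q = d)"

lemma lookup_form_of_degree:
  "form_of_degree d f \<Longrightarrow> p + q \<noteq> d \<Longrightarrow> Poly_Mapping.lookup f (p,q) = 0"
  unfolding form_of_degree_def by (auto simp: in_keys_iff)

lemma tdeg_form_of_degree:
  assumes "form_of_degree d f" and "f \<noteq> 0"
  shows "tdeg f = d"
proof -
  obtain p q where "(p,q) \<in> Poly_Mapping.keys f"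
    using \<open>f \<noteq> 0\<close> by (metis ex_in_conv keys_eq_empty surj_pair)
  then have "{p + q | p q. (p,q) \<in> Poly_Mapping.keys f} = {d}"
    using assms(1) unfolding form_of_degree_def by fastforce
  then show ?thesis unfolding tdeg_def by simp
qed

lemma form_of_degree_tdeg_if_Lset: "f \<in> Lset \<Longrightarrow> form_of_degree (tdeg f) f"
proof -
  assume "f \<in> Lset"
  then obtain d where "form_of_degree d f" "f \<noteq> 0"
    unfolding Lset_def is_form_def form_of_degree_def by auto
  with tdeg_form_of_degree show ?thesis by metis
qed

lemma lookup_homog:
  "Poly_Mapping.lookup (homog c) (p,q) = (if p + q = degree c then coeff c p else 0)"
proof -
  have "Poly_Mapping.lookup (homog c) (p,q) =
      (\<Sum>i\<le>degree c. if i = p then (if p + q = degree c then coeff c i else 0) else 0)"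
    unfolding homog_def lookup_sum lookup_single when_def by (rule sum.cong) auto
  then show ?thesis by (simp add: sum.delta)
qed

lemma form_of_degree_homog: "form_of_degree (degree c) (homog c)"
  unfolding form_of_degree_def by (auto simp: in_keys_iff lookup_homog split: if_splits)

lemma coeff_dehom:
  assumes "form_of_degree d f"
  shows "coeff (dehom f) k = (if k \<le> d then Poly_Mapping.lookup f (k, d - k) else 0)"
proof -
  have "coeff (dehom f) k =
      (\<Sum>x\<in>Poly_Mapping.keys f. if fst x = k then Poly_Mapping.lookup f x else 0)"
    unfolding dehom_def coeff_sum by (rule sum.cong) (auto simp: coeff_monom)
  also have "\<dots> =
      (\<Sum>x\<in>Poly_Mapping.keys f. if x = (k, d - k) then Poly_Mapping.lookup f x else 0)"
    using assms unfolding form_of_degree_def by (intro sum.cong) auto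
  also have "\<dots> = (if k \<le> d then Poly_Mapping.lookup f (k, d - k) else 0)"
    using assms by (auto simp: sum.delta in_keys_iff lookup_form_of_degree)
  finally show ?thesis .
qed

lemma lookup_inverse_form:
  "Poly_Mapping.lookup (inverse_form s n) (u,v) = (if u < n \<and> v = n - 1 - u then s u else 0)"
proof -
  have "Poly_Mapping.lookup (inverse_form s n) (u,v) =
      (\<Sum>i<n. if i = u then (if v = n - 1 - u then s i else 0) else 0)"
    unfolding inverse_form_def lookup_sum lookup_single when_def by (rule sum.cong) auto
  then show ?thesis by (simp add: sum.delta)
qed

lemma act_coeff_inverse_form:
  assumes "form_of_degree d \<phi>"
  shows "act_coeff \<phi> (inverse_form s n) (a,b) =
    (if a + b + d + 1 = n then \<Sum>i\<le>d. Poly_Mapping.lookup \<phi> (i, d - i) * s (a + i) else 0)"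
proof -
  let ?g = "\<lambda>(p,q). Poly_Mapping.lookup \<phi> (p,q) *
    Poly_Mapping.lookup (inverse_form s n) (a + p, b + q)"
  have keys: "Poly_Mapping.keys \<phi> \<subseteq> (\<lambda>i. (i, d - i)) ` {..d}"
    using assms unfolding form_of_degree_def by force
  have "act_coeff \<phi> (inverse_form s n) (a,b) = (\<Sum>x\<in>(\<lambda>i. (i, d - i)) ` {..d}. ?g x)"
    unfolding act_coeff_def
    by (simp, rule sum.mono_neutral_left) (use keys in \<open>auto simp: in_keys_iff\<close>)
  also have "\<dots> = (\<Sum>i\<le>d. ?g (i, d - i))"
    by (subst sum.reindex) (auto simp: inj_on_def)
  also have "\<dots> = (\<Sum>i\<le>d. if a + b + d + 1 = n
      then Poly_Mapping.lookup \<phi> (i, d - i) * s (a + i) else 0)"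
    by (rule sum.cong) (auto simp: lookup_inverse_form)
  finally show ?thesis by simp
qed

lemma form_of_degree_in_annih_inverse_form_iff:
  assumes "form_of_degree d \<phi>"
  shows "\<phi> \<in> annih (inverse_form s n) \<longleftrightarrow>
     (\<forall>k. k + d < n \<longrightarrow> (\<Sum>i\<le>d. Poly_Mapping.lookup \<phi> (i, d - i) * s (k + i)) = 0)"
proof
  assume "\<phi> \<in> annih (inverse_form s n)"
  then have vanish: "act_coeff \<phi> (inverse_form s n) (k, n - 1 - k - d) = 0" for k
    unfolding annih_def by simp
  show "\<forall>k. k + d < n \<longrightarrow> (\<Sum>i\<le>d. Poly_Mapping.lookup \<phi> (i, d - i) * s (k + i)) = 0"
  proof (intro allI impI)
    fix k assume "k + d < n"
    then have "k + (n - 1 - k - d) + d + 1 = n" by simp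
    with vanish[of k] show "(\<Sum>i\<le>d. Poly_Mapping.lookup \<phi> (i, d - i) * s (k + i)) = 0"
      unfolding act_coeff_inverse_form[OF assms] by (simp only: if_True simp_thms)
  qed
next
  assume "\<forall>k. k + d < n \<longrightarrow> (\<Sum>i\<le>d. Poly_Mapping.lookup \<phi> (i, d - i) * s (k + i)) = 0"
  then have "act_coeff \<phi> (inverse_form s n) (a,b) = 0" for a b
    by (auto simp: act_coeff_inverse_form[OF assms])
  then show "\<phi> \<in> annih (inverse_form s n)"
    unfolding annih_def by auto
qed

lemma homog_chi:
  fixes s :: "nat \<Rightarrow> 'a::comm_semiring_1"
  assumes c: "c \<in> chi s n"
  shows "homog c \<in> annih (inverse_form s n) \<inter> Lset"
    and "tdeg (homog c) = degree c"
    and "dehom (homog c) = c"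
proof -
  have monic: "lead_coeff c = 1" using c unfolding chi_def by auto
  then have "homog c \<noteq> 0"
    by (metis lookup_homog lookup_zero add_0_right zero_neq_one)
  then show tdeg: "tdeg (homog c) = degree c"
    by (rule tdeg_form_of_degree[OF form_of_degree_homog])
  have "homog c \<in> annih (inverse_form s n)"
    unfolding form_of_degree_in_annih_inverse_form_iff[OF form_of_degree_homog]
    using c by (auto simp: chi_def lookup_homog)
  moreover have "homog c \<in> Lset"
    using \<open>homog c \<noteq> 0\<close> tdeg monic form_of_degree_homog[of c]
    unfolding Lset_def is_form_def form_of_degree_def by (auto simp: lookup_homog)
  ultimately show "homog c \<in> annih (inverse_form s n) \<inter> Lset" by simp
  show "dehom (homog c) = c"
    by (rule poly_eqI) (auto simp: coeff_dehom[OF form_of_degree_homog] lookup_homog coeff_eq_0)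
qed

lemma dehom_annih_inverse_form_Lset:
  fixes s :: "nat \<Rightarrow> 'a::comm_semiring_1"
  assumes f: "f \<in> annih (inverse_form s n) \<inter> Lset"
  shows "dehom f \<in> chi s n"
    and "degree (dehom f) = tdeg f"
    and "homog (dehom f) = f"
proof -
  let ?d = "tdeg f"
  have form: "form_of_degree ?d f" using f form_of_degree_tdeg_if_Lset by blast
  have one: "Poly_Mapping.lookup f (?d, 0) = 1" using f unfolding Lset_def by auto
  note coeff = coeff_dehom[OF form]
  show deg: "degree (dehom f) = ?d"
  proof (rule antisym)
    show "degree (dehom f) \<le> ?d" by (rule degree_le) (simp add: coeff)
    show "?d \<le> degree (dehom f)" by (rule le_degree) (simp add: coeff one)
  qed
  have "\<forall>k. k + ?d < n \<longrightarrow> (\<Sum>i\<le>?d. Poly_Mapping.lookup f (i, ?d - i) * s (k + i)) = 0"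
    using f form_of_degree_in_annih_inverse_form_iff[OF form] by blast
  then show "dehom f \<in> chi s n"
    unfolding chi_def by (auto simp: deg coeff one)
  show "homog (dehom f) = f"
  proof (rule poly_mapping_eqI)
    fix pq :: "nat \<times> nat"
    obtain p q where pq: "pq = (p,q)" by (cases pq)
    show "Poly_Mapping.lookup (homog (dehom f)) pq = Poly_Mapping.lookup f pq"
    proof (cases "p + q = ?d")
      case True
      then have "q = ?d - p" by simp
      with True show ?thesis by (simp add: pq lookup_homog deg coeff)
    next
      case False
      then show ?thesis by (simp add: pq lookup_homog deg lookup_form_of_degree[OF form])
    qed
  qed
qed

lemma degree_image_chi:
  fixes s :: "nat \<Rightarrow> 'a::comm_semiring_1"
  shows "degree ` chi s n = tdeg ` (annih (inverse_form s n) \<inter> Lset)"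
proof
  show "degree ` chi s n \<subseteq> tdeg ` (annih (inverse_form s n) \<inter> Lset)"
    by (metis homog_chi(1,2) image_eqI image_subsetI)
  show "tdeg ` (annih (inverse_form s n) \<inter> Lset) \<subseteq> degree ` chi s n"
    by (metis dehom_annih_inverse_form_Lset(1,2) image_eqI image_subsetI)
qed

lemma lin_compl_eq_lambdaF:
  fixes s :: "nat \<Rightarrow> 'a::comm_semiring_1"
  shows "lin_compl s n = lambdaF (inverse_form s n)"
proof -
  have "(\<lambda>d. \<exists>c\<in>chi s n. degree c = d) = (\<lambda>d. d \<in> degree ` chi s n)"
    and "(\<lambda>d. \<exists>f\<in>annih (inverse_form s n) \<inter> Lset. tdeg f = d) =
      (\<lambda>d. d \<in> tdeg ` (annih (inverse_form s n) \<inter> Lset))"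
    by blast+
  then show ?thesis
    unfolding lin_compl_def lambdaF_def by (simp only: degree_image_chi)
qed

theorem theorem2p3:
  fixes s :: "nat \<Rightarrow> 'a::field" and n :: nat
  assumes "n \<ge> 1" and "\<exists>i<n. s i \<noteq> 0"
  shows "bij_betw homog (chi s n) (annih (inverse_form s n) \<inter> Lset)
       \<and> bij_betw dehom (annih (inverse_form s n) \<inter> Lset) (chi s n)
       \<and> (\<forall>c\<in>chi s n. dehom (homog c) = c)
       \<and> (\<forall>f\<in>annih (inverse_form s n) \<inter> Lset. homog (dehom f) = f)
       \<and> (\<forall>c\<in>chi s n. tdeg (homog c) = degree c)
       \<and> (\<forall>f\<in>annih (inverse_form s n) \<inter> Lset. degree (dehom f) = tdeg f)
       \<and> lin_compl s n = lambdaF (inverse_form s n)"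
proof (intro conjI ballI)
  show "bij_betw homog (chi s n) (annih (inverse_form s n) \<inter> Lset)"
    by (rule bij_betw_byWitness[where f' = dehom])
      (use homog_chi dehom_annih_inverse_form_Lset in blast)+
  show "bij_betw dehom (annih (inverse_form s n) \<inter> Lset) (chi s n)"
    by (rule bij_betw_byWitness[where f' = homog])
      (use homog_chi dehom_annih_inverse_form_Lset in blast)+
  show "lin_compl s n = lambdaF (inverse_form s n)"
    by (rule lin_compl_eq_lambdaF)
qed (use homog_chi dehom_annih_inverse_form_Lset in blast)+

end
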